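(* Let $(n_k)_{k\ge0}$ be a strictly increasing sequence of nonnegative integers. Then $(y_{n_k})_{k\ge0}$ is a Stieltjes moment sequence for every Stieltjes moment sequence $(y_n)_{n\ge0}$ if and only if there exist $d,\ell\in\mathbb{N}$ such that $n_k=dk+\ell$ for all $k\in\mathbb{N}$.
   Context: A Stieltjes moment sequence is a sequence $y$ for which there is a nonnegative Borel measure $\mu$ supported in $[0,\infty)$ with $y_n=\int x^n\,d\mu$ for all $n\ge0$. $\mathbb{N}=\{0,1,2,\dots\}$. *)

theory Defs
  imports "HOL-Analysis.Analysis"
begin

definition stieltjes_moment_seq :: "(nat \<Rightarrow> real) \<Rightarrow> bool" where
  "stieltjes_moment_seq y \<longleftrightarrow>
     (\<exists>M :: real measure. sets M = sets borel \<and> emeasure M {..<0} = 0 \<and>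
        (\<forall>n. integrable M (\<lambda>x. x ^ n) \<and> y n = (\<integral>x. x ^ n \<partial>M)))"

end

theory Submission
  imports Defs "HOL-Probability.Giry_Monad"
begin

text \<open>If every Stieltjes moment sequence stays one along \<open>n\<close>, apply this to the moments
  \<open>x ^ m\<close> of the point mass at \<open>x \<ge> 0\<close>. Moment sequences are log-convex (the moments of
  \<open>t ^ j * (t - c)\<^sup>2\<close> are nonnegative for every \<open>c\<close>), so \<open>x = 2\<close> gives
  \<open>2 n(k+1) \<le> n(k) + n(k+2)\<close> and \<open>x = 1/2\<close> the reverse inequality: \<open>n\<close> has vanishing second
  differences. Conversely, \<open>y(d k + l)\<close> is the \<open>k\<close>-th moment of the image of the measure
  \<open>x ^ l d\<mu>\<close> under \<open>x \<mapsto> x ^ d\<close>, which is again carried by \<open>[0, \<infinity>)\<close>.\<close>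

lemma stieltjes_moment_seqE:
  assumes "stieltjes_moment_seq y"
  obtains M :: "real measure" where "sets M = sets borel" and "AE x in M. 0 \<le> x"
    and "\<And>m. integrable M (\<lambda>x. x ^ m)" and "\<And>m. y m = (\<integral>x. x ^ m \<partial>M)"
proof -
  obtain M :: "real measure" where sets: "sets M = sets borel" and neg: "emeasure M {..<0} = 0"
    and moments: "\<And>m. integrable M (\<lambda>x. x ^ m) \<and> y m = (\<integral>x. x ^ m \<partial>M)"
    using assms unfolding stieltjes_moment_seq_def by blast
  have "AE x in M. 0 \<le> x"
  proof (rule AE_I')
    show "{..<0::real} \<in> null_sets M" using neg sets by (simp add: null_sets_def)
  qed auto
  with sets moments that show thesis by blast
qed

lemma stieltjes_moment_seq_powers:
  fixes x :: real
  assumes "0 \<le> x"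
  shows "stieltjes_moment_seq (\<lambda>m. x ^ m)"
  unfolding stieltjes_moment_seq_def
proof (intro exI[of _ "return borel x"] conjI allI)
  show "sets (return borel x) = sets borel" by simp
  show "emeasure (return borel x) {..<0} = 0" using assms by simp
  fix m :: nat
  interpret prob_space "return borel x" by (rule prob_space_return) simp
  have "AE t in return borel x. x ^ m = t ^ m" by (simp add: AE_return)
  then show "integrable (return borel x) (\<lambda>t. t ^ m)"
    by (subst integrable_cong_AE[where g="\<lambda>_. x ^ m"]) auto
  show "x ^ m = (\<integral>t. t ^ m \<partial>return borel x)"
    by (subst integral_return) auto
qed

lemma stieltjes_moment_seq_arith_subseq:
  assumes "stieltjes_moment_seq y"
  shows "stieltjes_moment_seq (\<lambda>k. y (d * k + l))"
proof -
  obtain M :: "real measure" where sets[measurable_cong]: "sets M = sets borel"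
    and nonneg: "AE x in M. 0 \<le> x"
    and integrable: "\<And>m. integrable M (\<lambda>x. x ^ m)" and moment: "\<And>m. y m = (\<integral>x. x ^ m \<partial>M)"
    using stieltjes_moment_seqE[OF assms] by blast
  have weight_nonneg: "AE x in M. 0 \<le> x ^ l" using nonneg by eventually_elim simp
  define D where "D = density M (\<lambda>x. ennreal (x ^ l))"
  have [measurable_cong]: "sets D = sets borel" unfolding D_def using sets by simp
  define N where "N = distr D borel (\<lambda>x. x ^ d)"
  have meas: "(\<lambda>x::real. x ^ d) \<in> measurable D borel" by measurable
  have moment_eq: "(\<lambda>x::real. x ^ l *\<^sub>R (x ^ d) ^ k) = (\<lambda>x. x ^ (d * k + l))" for k
    by (auto simp: power_mult[symmetric] power_add mult.commute)
  show ?thesis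
    unfolding stieltjes_moment_seq_def
  proof (intro exI[of _ N] conjI allI)
    show "sets N = sets borel" unfolding N_def by simp
    have "AE x in M. x ^ d < 0 \<longrightarrow> x ^ l = 0"
      using nonneg by eventually_elim auto
    moreover have "(\<lambda>x::real. x ^ d) -` {..<0} \<inter> space M \<in> sets M"
      using measurable_sets[OF meas, of "{..<0}"] by (simp add: D_def)
    ultimately have "(\<lambda>x::real. x ^ d) -` {..<0} \<inter> space D \<in> null_sets D"
      unfolding D_def using weight_nonneg by (subst null_sets_density_iff) auto
    then show "emeasure N {..<0} = 0"
      unfolding N_def using meas by (subst emeasure_distr) (auto simp: null_sets_def)
    fix k :: nat
    have "integrable N (\<lambda>t. t ^ k) \<longleftrightarrow> integrable D (\<lambda>x. (x ^ d) ^ k)"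
      unfolding N_def using meas by (subst integrable_distr_eq) auto
    also have "\<dots> \<longleftrightarrow> integrable M (\<lambda>x. x ^ l *\<^sub>R (x ^ d) ^ k)"
      unfolding D_def by (rule integrable_density) (use weight_nonneg in auto)
    finally show "integrable N (\<lambda>t. t ^ k)" using integrable moment_eq by simp
    have "(\<integral>t. t ^ k \<partial>N) = (\<integral>x. (x ^ d) ^ k \<partial>D)"
      unfolding N_def using meas by (subst integral_distr) auto
    also have "\<dots> = (\<integral>x. x ^ l *\<^sub>R (x ^ d) ^ k \<partial>M)"
      unfolding D_def by (rule integral_density) (use weight_nonneg in auto)
    finally show "y (d * k + l) = (\<integral>t. t ^ k \<partial>N)" using moment moment_eq by simp
  qed
qed

lemma square_le_of_quadratic_nonneg:
  fixes a b c :: real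
  assumes "0 \<le> a" and "\<And>t. 0 \<le> c - 2 * t * b + t\<^sup>2 * a"
  shows "b\<^sup>2 \<le> a * c"
proof (cases "a = 0")
  case True
  have "b = 0"
  proof (rule ccontr)
    assume "b \<noteq> 0"
    have "0 \<le> c - 2 * ((c + 1) / (2 * b)) * b"
      using assms(2)[of "(c + 1) / (2 * b)"] True by simp
    also have "\<dots> = -1" using \<open>b \<noteq> 0\<close> by (simp add: field_simps)
    finally show False by simp
  qed
  then show ?thesis using True by simp
next
  case False
  then have "a > 0" using assms(1) by simp
  have "0 \<le> c - 2 * (b / a) * b + (b / a)\<^sup>2 * a" by (rule assms(2))
  also have "\<dots> = (a * c - b\<^sup>2) / a"
    using \<open>a > 0\<close> by (simp add: field_simps power2_eq_square)
  finally show ?thesis using \<open>a > 0\<close> by (simp add: zero_le_divide_iff)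
qed

lemma stieltjes_moment_seq_log_convex:
  assumes "stieltjes_moment_seq y"
  shows "(y (Suc j))\<^sup>2 \<le> y j * y (Suc (Suc j))"
proof -
  obtain M :: "real measure" where "sets M = sets borel" and nonneg: "AE x in M. 0 \<le> x"
    and integrable: "\<And>m. integrable M (\<lambda>x. x ^ m)" and moment: "\<And>m. y m = (\<integral>x. x ^ m \<partial>M)"
    using stieltjes_moment_seqE[OF assms] by blast
  have "0 \<le> y j"
    unfolding moment by (rule integral_nonneg_AE) (use nonneg in eventually_elim, auto)
  moreover have "0 \<le> y (Suc (Suc j)) - 2 * t * y (Suc j) + t\<^sup>2 * y j" for t
  proof -
    have "0 \<le> (\<integral>x. x ^ j * (x - t)\<^sup>2 \<partial>M)"
      by (rule integral_nonneg_AE) (use nonneg in eventually_elim, auto)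
    also have "\<dots> = (\<integral>x. x ^ Suc (Suc j) - (2 * t) * x ^ Suc j + t\<^sup>2 * x ^ j \<partial>M)"
      by (simp add: power2_eq_square algebra_simps)
    also have "\<dots> = y (Suc (Suc j)) - 2 * t * y (Suc j) + t\<^sup>2 * y j"
      using integrable[of j] integrable[of "Suc j"] integrable[of "Suc (Suc j)"]
      by (simp add: moment integral_add integral_diff)
    finally show ?thesis .
  qed
  ultimately show ?thesis
    by (rule square_le_of_quadratic_nonneg)
qed

lemma exponent_midpoint_of_power_log_convex:
  fixes a b c :: nat
  assumes "\<And>x::real. 0 \<le> x \<Longrightarrow> (x ^ b)\<^sup>2 \<le> x ^ a * x ^ c"
  shows "a + c = 2 * b"
proof -
  have "(2::real) ^ (2 * b) \<le> 2 ^ (a + c)"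
    using assms[of 2] by (simp add: power_mult[symmetric] power_add mult.commute)
  then have "2 * b \<le> a + c" by simp
  moreover have "(1/2::real) ^ (2 * b) \<le> (1/2) ^ (a + c)"
    using assms[of "1/2"] by (simp add: power_mult[symmetric] power_add mult.commute)
  then have "a + c \<le> 2 * b" by (subst (asm) power_decreasing_iff) auto
  ultimately show ?thesis by simp
qed

lemma arith_progression_of_second_difference_zero:
  fixes n :: "nat \<Rightarrow> nat"
  assumes "n 0 \<le> n 1" and "\<And>k. n k + n (Suc (Suc k)) = 2 * n (Suc k)"
  shows "n k = (n 1 - n 0) * k + n 0"
proof -
  define d where "d = n 1 - n 0"
  have step: "n (Suc k) = n k + d" for k
  proof (induction k)
    case (Suc k)
    then show ?case using assms(2)[of k] by simp
  qed (use assms(1) in \<open>simp add: d_def\<close>)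
  have "n k = d * k + n 0" by (induction k) (simp_all add: step)
  then show ?thesis by (simp add: d_def)
qed

theorem theorem4p3:
  fixes n :: "nat \<Rightarrow> nat"
  assumes "strict_mono n"
  shows "(\<forall>y. stieltjes_moment_seq y \<longrightarrow> stieltjes_moment_seq (\<lambda>k. y (n k)))
         \<longleftrightarrow> (\<exists>d l :: nat. \<forall>k. n k = d * k + l)"
proof
  assume preserves: "\<forall>y. stieltjes_moment_seq y \<longrightarrow> stieltjes_moment_seq (\<lambda>k. y (n k))"
  have "n k + n (Suc (Suc k)) = 2 * n (Suc k)" for k
  proof (rule exponent_midpoint_of_power_log_convex)
    fix x :: real
    assume "0 \<le> x"
    then have "stieltjes_moment_seq (\<lambda>k. x ^ n k)"
      using preserves stieltjes_moment_seq_powers by blast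
    then show "(x ^ n (Suc k))\<^sup>2 \<le> x ^ n k * x ^ n (Suc (Suc k))"
      by (rule stieltjes_moment_seq_log_convex)
  qed
  moreover have "n 0 \<le> n 1" using assms by (simp add: strict_mono_less_eq)
  ultimately show "\<exists>d l. \<forall>k. n k = d * k + l"
    using arith_progression_of_second_difference_zero by blast
next
  assume "\<exists>d l. \<forall>k. n k = d * k + l"
  then show "\<forall>y. stieltjes_moment_seq y \<longrightarrow> stieltjes_moment_seq (\<lambda>k. y (n k))"
    using stieltjes_moment_seq_arith_subseq by auto
qed

end
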